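(* Let $0<k<n$ and let $\mathcal{F}=(\mathcal{F}_{n-k},\dots,\mathcal{F}_2,\mathcal{F}_1)$ be a Ferrers diagram of size $m$ embedded in a $k\times(n-k)$ box. Set $\mathcal{F}_0=k$. Then the number $\mathrm{ind}_m(\mathcal{F})$ of Ferrers diagrams of size $m$ embedded in a $k\times(n-k)$ box that precede $\mathcal{F}$ in the order defined below is \[\mathrm{ind}_m(\mathcal{F})=\sum_{j=1}^{n-k}\ \sum_{a=\mathcal{F}_j+1}^{\mathcal{F}_{j-1}} p\Bigl(a,\,n-k-j,\,m-\sum_{i=1}^{j-1}\mathcal{F}_i-a\Bigr).\]
   Context: A Ferrers diagram embedded in a $k\times(n-k)$ box is represented by an integer vector $(\mathcal{F}_{n-k},\dots,\mathcal{F}_1)$ with $0\le\mathcal{F}_{i+1}\le\mathcal{F}_i\le k$ for $1\le i\le n-k-1$, where $\mathcal{F}_i$ is the number of dots in the $i$-th column, columns numbered from right to left; its size is $\sum_i\mathcal{F}_i$. Order on diagrams of the same size: $\mathcal{F}<\widetilde{\mathcal{F}}$ if $\mathcal{F}_i>\widetilde{\mathcal{F}}_i$ for the least index $i$ with $\mathcal{F}_i\ne\widetilde{\mathcal{F}}_i$. $p(a,\eta,s)$ is the number of partitions of $s$ whose Ferrers diagram fits in an $a\times\eta$ box, with $p(a,\eta,0)=1$ and $p(a,\eta,s)=0$ if $s<0$ or $s>a\eta$. An empty inner sum is $0$. *)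

theory Defs
  imports Main
begin

text \<open>A Ferrers diagram in an h x w box (h rows, w columns), given by column heights
  F 1, ..., F w (columns numbered right to left), with F (i+1) \<le> F i \<le> h.\<close>
definition ferrers :: "nat \<Rightarrow> nat \<Rightarrow> (nat \<Rightarrow> nat) \<Rightarrow> bool" where
  "ferrers h w F \<longleftrightarrow> (\<forall>i. F i \<le> h) \<and> (\<forall>i. 1 \<le> i \<and> i < w \<longrightarrow> F (i+1) \<le> F i)
      \<and> (\<forall>i. i = 0 \<or> w < i \<longrightarrow> F i = 0)"

definition fsize :: "nat \<Rightarrow> (nat \<Rightarrow> nat) \<Rightarrow> nat" where
  "fsize w F = (\<Sum>i=1..w. F i)"

definition ferrers_less :: "nat \<Rightarrow> (nat \<Rightarrow> nat) \<Rightarrow> (nat \<Rightarrow> nat) \<Rightarrow> bool" where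
  "ferrers_less w G F \<longleftrightarrow> (\<exists>i\<in>{1..w}. G i > F i \<and> (\<forall>j\<in>{1..<i}. G j = F j))"

text \<open>p(a, eta, s): number of partitions of s whose Ferrers diagram fits in an a x eta box
  (at most eta parts, each at most a); 0 for s < 0.\<close>
definition pbox :: "nat \<Rightarrow> nat \<Rightarrow> int \<Rightarrow> nat" where
  "pbox a eta s = (if s < 0 then 0 else card {F. ferrers a eta F \<and> fsize eta F = nat s})"

definition ind :: "nat \<Rightarrow> nat \<Rightarrow> nat \<Rightarrow> (nat \<Rightarrow> nat) \<Rightarrow> nat" where
  "ind k n m F = card {G. ferrers k (n-k) G \<and> fsize (n-k) G = m \<and> ferrers_less (n-k) G F}"

end

theory Submission imports Defs "HOL-Library.FuncSet" begin

text \<open>A diagram G preceding F is classified by the first column j where it differs from F and by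
  its height a = G j there; then F j < a \<le> F (j - 1) (with F 0 = k), and the remaining columns
  j+1, ..., n-k of G form an arbitrary diagram in an a \<times> (n-k-j) box of size
  m - (F 1 + ... + F (j-1)) - a. Counting each class gives the corresponding summand.\<close>

lemma ferrers_antimono:
  assumes "ferrers h w G" "1 \<le> i" "i \<le> i'"
  shows "G i' \<le> G i"
  using assms(3)
proof (induction i' rule: dec_induct)
  case (step q)
  have "G (Suc q) \<le> G q"
    using assms(1,2) step(1) unfolding ferrers_def
    by (cases "q < w") (auto simp: not_less)
  with step show ?case by simp
qed simp

lemma finite_ferrers: "finite {G. ferrers h w G}"
proof -
  let ?A = "{G. ferrers h w G}"
  have "inj_on (\<lambda>G. restrict G {..w}) ?A"
  proof (rule inj_onI, rule ext)
    fix G1 G2 i assume "G1 \<in> ?A" "G2 \<in> ?A" "restrict G1 {..w} = restrict G2 {..w}"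
    then show "G1 i = G2 i"
      unfolding ferrers_def by (cases "i \<le> w") (metis atMost_iff restrict_apply', auto)
  qed
  moreover have "(\<lambda>G. restrict G {..w}) ` ?A \<subseteq> PiE {..w} (\<lambda>_. {..h})"
    unfolding ferrers_def by (auto simp: PiE_def extensional_def)
  then have "finite ((\<lambda>G. restrict G {..w}) ` ?A)"
    by (rule finite_subset) (intro finite_PiE, auto)
  ultimately show ?thesis using finite_imageD by blast
qed

definition ferrers_tail :: "nat \<Rightarrow> (nat \<Rightarrow> nat) \<Rightarrow> nat \<Rightarrow> nat" where
  "ferrers_tail j G = (\<lambda>i. if i = 0 then 0 else G (i + j))"

definition ferrers_extend :: "(nat \<Rightarrow> nat) \<Rightarrow> nat \<Rightarrow> nat \<Rightarrow> (nat \<Rightarrow> nat) \<Rightarrow> nat \<Rightarrow> nat" where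
  "ferrers_extend F j a H = (\<lambda>i. if i < j then F i else if i = j then a else H (i - j))"

lemma sum_atLeastAtMost_split_at:
  fixes G :: "nat \<Rightarrow> 'a::comm_monoid_add"
  assumes "1 \<le> j" "j \<le> w"
  shows "(\<Sum>i=1..w. G i) = (\<Sum>i\<in>{1..<j}. G i) + G j + (\<Sum>i=1..w-j. G (i+j))"
proof -
  have "(\<Sum>i=1..w. G i) = (\<Sum>i\<in>{1..<j}. G i) + (\<Sum>i\<in>{j..<Suc w}. G i)"
    using assms by (metis atLeastLessThanSuc_atLeastAtMost le_SucI sum.atLeastLessThan_concat)
  moreover have "(\<Sum>i\<in>{j..<Suc w}. G i) = G j + (\<Sum>i\<in>{Suc j..<Suc w}. G i)"
    using assms by (intro sum.atLeast_Suc_lessThan) simp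
  moreover have "{Suc j..<Suc w} = {1+j..<Suc (w-j)+j}" using assms by auto
  then have "(\<Sum>i\<in>{Suc j..<Suc w}. G i) = (\<Sum>i=1..w-j. G (i+j))"
    by (simp only: sum.shift_bounds_nat_ivl atLeastLessThanSuc_atLeastAtMost)
  ultimately show ?thesis by (simp add: add.assoc)
qed

lemma fsize_split_at:
  assumes "1 \<le> j" "j \<le> w"
  shows "fsize w G = (\<Sum>i\<in>{1..<j}. G i) + G j + fsize (w-j) (ferrers_tail j G)"
proof -
  have "fsize (w-j) (ferrers_tail j G) = (\<Sum>i=1..w-j. G (i+j))"
    unfolding fsize_def ferrers_tail_def by (intro sum.cong) auto
  then show ?thesis
    unfolding fsize_def using sum_atLeastAtMost_split_at[OF assms] by simp
qed

lemma ferrers_tail: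
  assumes "ferrers h w G" "1 \<le> j" "G j \<le> a"
  shows "ferrers a (w-j) (ferrers_tail j G)"
  unfolding ferrers_def ferrers_tail_def
proof (intro conjI allI impI)
  fix i show "(if i = 0 then 0 else G (i + j)) \<le> a"
    using ferrers_antimono[OF assms(1,2), of "i+j"] assms(3) by auto
qed (use assms(1) in \<open>auto simp: ferrers_def\<close>)

lemma ferrers_extend:
  assumes F: "ferrers k w F" and j: "1 \<le> j" "j \<le> w"
    and a: "a \<le> (F(0:=k)) (j-1)" and H: "ferrers a (w-j) H"
  shows "ferrers k w (ferrers_extend F j a H)"
  unfolding ferrers_def
proof (intro conjI allI impI)
  have "a \<le> k"
    using a F unfolding ferrers_def by (cases "j = 1") (auto intro: le_trans)
  moreover have "F i \<le> k" "H i \<le> a" for i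
    using F H unfolding ferrers_def by blast+
  ultimately have "F i \<le> k" "H i \<le> k" for i
    using order.trans by blast+
  with \<open>a \<le> k\<close> show "ferrers_extend F j a H i \<le> k" for i
    unfolding ferrers_extend_def by simp
next
  fix i assume i: "1 \<le> i \<and> i < w"
  consider "i + 1 < j" | "i + 1 = j" | "i = j" | "j < i" by linarith
  then show "ferrers_extend F j a H (i+1) \<le> ferrers_extend F j a H i"
  proof cases
    case 1
    with F i show ?thesis by (simp add: ferrers_def ferrers_extend_def)
  next
    case 2
    then have "j = Suc i" by simp
    with a i show ?thesis by (simp add: ferrers_extend_def)
  next
    case 3
    with H show ?thesis by (simp add: ferrers_def ferrers_extend_def)
  next
    case 4
    then have "i + 1 - j = (i - j) + 1" "1 \<le> i - j" "i - j < w - j" using i by auto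
    then have "H (i + 1 - j) \<le> H (i - j)"
      using H unfolding ferrers_def by presburger
    with 4 show ?thesis by (simp add: ferrers_extend_def)
  qed
next
  fix i assume "i = 0 \<or> w < i"
  with F H j show "ferrers_extend F j a H i = 0"
    unfolding ferrers_def ferrers_extend_def by auto
qed

definition ferrers_branch ::
    "nat \<Rightarrow> nat \<Rightarrow> nat \<Rightarrow> (nat \<Rightarrow> nat) \<Rightarrow> nat \<Rightarrow> nat \<Rightarrow> (nat \<Rightarrow> nat) set" where
  "ferrers_branch k w m F j a =
     {G. ferrers k w G \<and> fsize w G = m \<and> (\<forall>i\<in>{1..<j}. G i = F i) \<and> G j = a}"

lemma finite_ferrers_branch: "finite (ferrers_branch k w m F j a)"
  by (rule finite_subset[OF _ finite_ferrers[of k w]]) (auto simp: ferrers_branch_def)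

lemma ferrers_branch_size:
  assumes "G \<in> ferrers_branch k w m F j a" "1 \<le> j" "j \<le> w"
  shows "m = (\<Sum>i\<in>{1..<j}. F i) + a + fsize (w-j) (ferrers_tail j G)"
proof -
  have "(\<Sum>i\<in>{1..<j}. G i) = (\<Sum>i\<in>{1..<j}. F i)"
    using assms(1) unfolding ferrers_branch_def by (intro sum.cong) auto
  with assms show ?thesis
    using fsize_split_at[of j w G] unfolding ferrers_branch_def by auto
qed

lemma bij_betw_ferrers_branch:
  assumes F: "ferrers k w F" and j: "1 \<le> j" "j \<le> w" and a: "a \<le> (F(0:=k)) (j-1)"
    and m: "m = (\<Sum>i\<in>{1..<j}. F i) + a + r"
  shows "bij_betw (ferrers_tail j) (ferrers_branch k w m F j a)
           {H. ferrers a (w-j) H \<and> fsize (w-j) H = r}"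
proof (rule bij_betw_byWitness[where f' = "ferrers_extend F j a"])
  show "\<forall>G\<in>ferrers_branch k w m F j a. ferrers_extend F j a (ferrers_tail j G) = G"
  proof (intro ballI ext)
    fix G i assume "G \<in> ferrers_branch k w m F j a"
    with F show "ferrers_extend F j a (ferrers_tail j G) i = G i"
      unfolding ferrers_branch_def ferrers_extend_def ferrers_tail_def ferrers_def
      by (cases "i = 0") auto
  qed
  show "\<forall>H\<in>{H. ferrers a (w-j) H \<and> fsize (w-j) H = r}. ferrers_tail j (ferrers_extend F j a H) = H"
    unfolding ferrers_def ferrers_extend_def ferrers_tail_def by (auto intro!: ext)
  show "ferrers_tail j ` ferrers_branch k w m F j a \<subseteq> {H. ferrers a (w-j) H \<and> fsize (w-j) H = r}"
  proof (rule image_subsetI)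
    fix G assume G: "G \<in> ferrers_branch k w m F j a"
    then have "ferrers a (w-j) (ferrers_tail j G)"
      using ferrers_tail[of k w G j a] j unfolding ferrers_branch_def by simp
    moreover have "fsize (w-j) (ferrers_tail j G) = r"
      using ferrers_branch_size[OF G j] m by simp
    ultimately show "ferrers_tail j G \<in> {H. ferrers a (w-j) H \<and> fsize (w-j) H = r}" by simp
  qed
  show "ferrers_extend F j a ` {H. ferrers a (w-j) H \<and> fsize (w-j) H = r} \<subseteq> ferrers_branch k w m F j a"
  proof (rule image_subsetI)
    fix H assume "H \<in> {H. ferrers a (w-j) H \<and> fsize (w-j) H = r}"
    then have H: "ferrers a (w-j) H" "fsize (w-j) H = r" by simp_all
    have "ferrers_tail j (ferrers_extend F j a H) = H"
      using H(1) unfolding ferrers_def ferrers_extend_def ferrers_tail_def by (auto intro!: ext)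
    then have "fsize w (ferrers_extend F j a H) = m"
      using fsize_split_at[OF j, of "ferrers_extend F j a H"] H(2) m
      by (simp add: ferrers_extend_def)
    then show "ferrers_extend F j a H \<in> ferrers_branch k w m F j a"
      using ferrers_extend[OF F j a H(1)] unfolding ferrers_branch_def ferrers_extend_def by simp
  qed
qed

lemma card_ferrers_branch:
  assumes F: "ferrers k w F" and j: "1 \<le> j" "j \<le> w" and a: "a \<le> (F(0:=k)) (j-1)"
  shows "card (ferrers_branch k w m F j a)
           = pbox a (w-j) (int m - (\<Sum>i=1..j-1. int (F i)) - int a)"
proof -
  define P where "P = (\<Sum>i\<in>{1..<j}. F i)"
  have "(\<Sum>i=1..j-1. int (F i)) = int P"
    unfolding P_def of_nat_sum using j by (intro sum.cong) auto
  moreover have "card (ferrers_branch k w m F j a) = pbox a (w-j) (int m - int P - int a)"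
  proof (cases "P + a \<le> m")
    case True
    then have "m = P + a + (m - P - a)" "\<not> int m - int P - int a < 0"
      "nat (int m - int P - int a) = m - P - a" by simp_all
    with bij_betw_same_card[OF bij_betw_ferrers_branch[OF F j a, of m "m - P - a"]]
    show ?thesis unfolding pbox_def P_def by presburger
  next
    case False
    then have "ferrers_branch k w m F j a = {}"
      using ferrers_branch_size[OF _ j] unfolding P_def by fastforce
    with False show ?thesis unfolding pbox_def by simp
  qed
  ultimately show ?thesis by simp
qed

lemma preceding_eq_UN_ferrers_branch:
  assumes "ferrers k w F"
  shows "{G. ferrers k w G \<and> fsize w G = m \<and> ferrers_less w G F} =
     (\<Union>(j, a)\<in>Sigma {1..w} (\<lambda>j. {(F(0:=k)) j + 1 .. (F(0:=k)) (j-1)}). ferrers_branch k w m F j a)"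
    (is "?L = (\<Union>(j, a)\<in>Sigma {1..w} ?A. _)")
proof (intro subsetI equalityI)
  fix G assume "G \<in> ?L"
  then have G: "ferrers k w G" "fsize w G = m" and "ferrers_less w G F" by auto
  then obtain i where i: "i \<in> {1..w}" "F i < G i" "\<forall>j\<in>{1..<i}. G j = F j"
    unfolding ferrers_less_def by blast
  have "G i \<le> (F(0:=k)) (i-1)"
  proof (cases "i = 1")
    case False
    then have "G i \<le> G (i-1)" "G (i-1) = F (i-1)"
      using ferrers_antimono[OF G(1), of "i-1" i] i by auto
    with False i(1) show ?thesis by auto
  qed (use G(1) in \<open>simp add: ferrers_def\<close>)
  with i have "(i, G i) \<in> Sigma {1..w} ?A" by auto
  moreover have "G \<in> ferrers_branch k w m F i (G i)"
    using G i unfolding ferrers_branch_def by simp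
  ultimately show "G \<in> (\<Union>(j, a)\<in>Sigma {1..w} ?A. ferrers_branch k w m F j a)" by blast
next
  fix G assume "G \<in> (\<Union>(j, a)\<in>Sigma {1..w} ?A. ferrers_branch k w m F j a)"
  then obtain j a where j: "j \<in> {1..w}" "F j < a" "G \<in> ferrers_branch k w m F j a"
    by (auto simp: Suc_le_eq)
  then have "ferrers_less w G F"
    unfolding ferrers_less_def ferrers_branch_def by (intro bexI[of _ j]) auto
  with j show "G \<in> ?L" unfolding ferrers_branch_def by simp
qed

text \<open>The pair (j, a) is determined by G: j is the first column where G exceeds F.\<close>
lemma ferrers_branch_disjoint:
  assumes "G \<in> ferrers_branch k w m F j a" "F j < a"
    and "G \<in> ferrers_branch k w m F j' a'" "F j' < a'" "1 \<le> j" "1 \<le> j'"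
  shows "(j, a) = (j', a')"
proof -
  have "G j = a" "G j' = a'" "\<forall>i\<in>{1..<j}. G i = F i" "\<forall>i\<in>{1..<j'}. G i = F i"
    using assms(1,3) unfolding ferrers_branch_def by auto
  with assms(2,4-6) have "j = j'"
    by (metis atLeastLessThan_iff linorder_neqE_nat less_irrefl)
  with \<open>G j = a\<close> \<open>G j' = a'\<close> show ?thesis by simp
qed

theorem theorem7:
  fixes k n m :: nat and F :: "nat \<Rightarrow> nat"
  assumes "0 < k" and "k < n"
    and "ferrers k (n-k) F" and "fsize (n-k) F = m"
  shows "ind k n m F =
    (\<Sum>j=1..n-k. \<Sum>a\<in>{(F(0:=k)) j + 1 .. (F(0:=k)) (j-1)}.
        pbox a (n-k-j) (int m - (\<Sum>i=1..j-1. int (F i)) - int a))"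
proof -
  define w where "w = n - k"
  define A where "A j = {(F(0:=k)) j + 1 .. (F(0:=k)) (j-1)}" for j
  have F: "ferrers k w F" using assms unfolding w_def by simp
  have "ind k n m F = card (\<Union>(j, a)\<in>Sigma {1..w} A. ferrers_branch k w m F j a)"
    unfolding ind_def w_def[symmetric] A_def preceding_eq_UN_ferrers_branch[OF F] ..
  also have "\<dots> = (\<Sum>(j, a)\<in>Sigma {1..w} A. card (ferrers_branch k w m F j a))"
  proof (subst card_UN_disjoint)
    show "\<forall>p\<in>Sigma {1..w} A. \<forall>q\<in>Sigma {1..w} A. p \<noteq> q \<longrightarrow>
        (case p of (j, a) \<Rightarrow> ferrers_branch k w m F j a) \<inter>
        (case q of (j, a) \<Rightarrow> ferrers_branch k w m F j a) = {}"
      using ferrers_branch_disjoint unfolding A_def by fastforce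
  qed (auto simp: A_def finite_ferrers_branch split_def)
  also have "\<dots> = (\<Sum>j=1..w. \<Sum>a\<in>A j. card (ferrers_branch k w m F j a))"
    by (rule sum.Sigma[symmetric]) (auto simp: A_def)
  also have "\<dots> = (\<Sum>j=1..w. \<Sum>a\<in>A j. pbox a (w-j) (int m - (\<Sum>i=1..j-1. int (F i)) - int a))"
    using card_ferrers_branch[OF F] by (intro sum.cong refl) (auto simp: A_def)
  finally show ?thesis unfolding w_def A_def .
qed

end
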